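(* Let $k\ge 1$ and $s\ge 2$ be integers, let $a_s>a_{s-1}>\dots>a_1\ge 1$ be integers, and let $m_1,\dots,m_s\ge 1$ be integers with $m_1+\dots+m_s=k$ and $m_s=2h+1$ for some integer $h\ge 0$. Let $b$ be the multiset consisting of $m_i$ copies of $a_i$ for $i=1,\dots,s$. Suppose $a_s>\sum_{i=1}^{s-1}m_ia_i$. Consider the quadratic form $$q(x)=\frac{1}{2}\sum_{i=1}^k\sum_{j=1}^k|i-j|\,x_ix_j$$ over all vectors $x=(x_1,\dots,x_k)$ whose entries are a rearrangement of the multiset $b$. Then, up to reversal of the order of entries (which leaves $q$ unchanged), $q$ is uniquely maximized by $$x=(\underbrace{a_s,\dots,a_s}_{h+1},\underbrace{a_1,\dots,a_1}_{m_1},\underbrace{a_2,\dots,a_2}_{m_2},\dots,\underbrace{a_{s-1},\dots,a_{s-1}}_{m_{s-1}},\underbrace{a_s,\dots,a_s}_{h}),$$ i.e. $h+1$ copies of $a_s$, followed by all remaining entries of $b$ other than $a_s$ in nondecreasing order, followed by $h$ copies of $a_s$.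
   Context: Motivation: for a caterpillar tree $T$ of order $n$ whose non-leaf vertices $v_1,\dots,v_k$ lie in this order along the spine, the Wiener index (sum of distances over all unordered vertex pairs) equals $W(T)=(n-1)^2+q(x)$ with $x_i=\deg(v_i)-1$; the multiset $b$ plays the role of the decremented degree sequence (non-leaf degrees minus one). *)

theory Defs
  imports "HOL-Library.Multiset" Complex_Main
begin

text \<open>The quadratic form q(x) = 1/2 sum_i sum_j |i-j| x_i x_j for a vector x = (x_1,...,x_k),
  represented as a list of length k (0-based indices; |i-j| is unaffected by the shift).\<close>
definition qform :: "int list \<Rightarrow> real" where
  "qform xs = (1/2) * (\<Sum>i<length xs. \<Sum>j<length xs.
      real (if i \<le> j then j - i else i - j) * real_of_int (xs ! i) * real_of_int (xs ! j))"

definition bmset :: "nat \<Rightarrow> (nat \<Rightarrow> int) \<Rightarrow> (nat \<Rightarrow> nat) \<Rightarrow> int multiset" where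
  "bmset s a m = (\<Sum>i\<in>{1..s}. replicate_mset (m i) (a i))"

end

theory Submission
  imports Defs
begin

text \<open>Exchanging two adjacent entries x, y of an arrangement changes q by (x - y) times the
  difference of the sums to their right and to their left, so at a maximiser no such exchange
  helps. As the entries other than a_s are positive and sum to less than a_s, this forces the
  copies of a_s into two runs at the ends (a run between smaller entries could be pushed
  outwards), of lengths h + 1 and h (a run two longer than the other would profit from
  giving up a copy), with the rest increasing away from the longer run (the mass on that side
  dominates). Maximisers exist since there are finitely many arrangements, and q is invariant
  under reversal.\<close>

fun index_weighted_sum :: "int list \<Rightarrow> int" where
  "index_weighted_sum [] = 0"
| "index_weighted_sum (x # xs) = sum_list (x # xs) + index_weighted_sum xs"

lemma index_weighted_sum_eq: "index_weighted_sum xs = (\<Sum>j<length xs. int (Suc j) * xs ! j)"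
proof (induction xs)
  case Nil
  then show ?case by simp
next
  case (Cons x xs)
  have "(\<Sum>j<length (x # xs). int (Suc j) * (x # xs) ! j)
      = x + (\<Sum>j<length xs. int (Suc (Suc j)) * xs ! j)"
    by (simp add: sum.lessThan_Suc_shift del: sum.lessThan_Suc)
  also have "\<dots> = x + (\<Sum>j<length xs. xs ! j) + (\<Sum>j<length xs. int (Suc j) * xs ! j)"
    by (simp add: algebra_simps sum.distrib sum_distrib_left)
  finally show ?case
    using Cons by (simp add: sum_list_sum_nth[of xs] atLeast0LessThan)
qed

lemma qform_Cons: "qform (x # xs) = qform xs + of_int (x * index_weighted_sum xs)"
proof -
  define d where "d = (\<lambda>i j::nat. real (if i \<le> j then j - i else i - j))"
  define n where "n = length xs"
  have d_Suc: "d (Suc i) (Suc j) = d i j" for i j by (simp add: d_def)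
  have d_0: "d 0 (Suc j) = real (Suc j)" "d (Suc j) 0 = real (Suc j)" "d 0 0 = 0" for j
    by (simp_all add: d_def)
  have "qform (x # xs) = (1/2) * (\<Sum>i<Suc n. \<Sum>j<Suc n.
      d i j * of_int ((x # xs) ! i) * of_int ((x # xs) ! j))"
    by (simp add: qform_def d_def n_def)
  also have "\<dots> = (1/2) * (2 * (of_int x * (\<Sum>j<n. real (Suc j) * of_int (xs ! j)))
       + (\<Sum>i<n. \<Sum>j<n. d i j * of_int (xs ! i) * of_int (xs ! j)))"
    by (simp add: sum.lessThan_Suc_shift d_Suc d_0 sum.distrib sum_distrib_left algebra_simps
        del: sum.lessThan_Suc)
  also have "\<dots> = qform xs + of_int (x * index_weighted_sum xs)"
    by (simp add: qform_def d_def n_def index_weighted_sum_eq)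
  finally show ?thesis .
qed

lemma qform_rev: "qform (rev xs) = qform xs"
proof -
  define n where "n = length xs"
  define d where "d = (\<lambda>i j::nat. real (if i \<le> j then j - i else i - j))"
  have d_flip: "d (n - Suc i) (n - Suc j) = d i j" if "i < n" "j < n" for i j
    using that by (simp add: d_def)
  have "qform (rev xs) = (1/2) * (\<Sum>i<n. \<Sum>j<n.
      d i j * of_int (xs ! (n - Suc i)) * of_int (xs ! (n - Suc j)))"
    unfolding qform_def n_def d_def by (simp add: rev_nth)
  also have "\<dots> = (1/2) * (\<Sum>i<n. \<Sum>j<n.
      d (n - Suc i) (n - Suc j) * of_int (xs ! i) * of_int (xs ! j))"
    by (subst sum.nat_diff_reindex[symmetric], subst (2) sum.nat_diff_reindex[symmetric])
      (simp add: d_flip)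
  also have "\<dots> = qform xs"
    unfolding qform_def n_def d_def by (intro arg_cong[where f="\<lambda>t. (1/2) * t"] sum.cong refl) auto
  finally show ?thesis .
qed

lemma index_weighted_sum_swap:
  "index_weighted_sum (u @ x # y # v) = index_weighted_sum (u @ y # x # v) + (y - x)"
  by (induction u) auto

lemma qform_swap:
  "qform (u @ x # y # v) - qform (u @ y # x # v) = of_int ((x - y) * (sum_list v - sum_list u))"
proof (induction u)
  case Nil
  then show ?case by (simp add: qform_Cons algebra_simps)
next
  case (Cons a u)
  then show ?case
    by (simp add: qform_Cons index_weighted_sum_swap[of u x y v] algebra_simps)
qed

definition swap_stable :: "int list \<Rightarrow> bool" where
  "swap_stable xs \<longleftrightarrow>
     (\<forall>u x y v. xs = u @ x # y # v \<longrightarrow> (y - x) * (sum_list v - sum_list u) \<le> 0)"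

lemma swap_stableD:
  "swap_stable (u @ x # y # v) \<Longrightarrow> (y - x) * (sum_list v - sum_list u) \<le> 0"
  unfolding swap_stable_def by blast

lemma swap_stable_if_qform_max:
  assumes "\<And>ys. mset ys = mset xs \<Longrightarrow> qform ys \<le> qform xs"
  shows "swap_stable xs"
  unfolding swap_stable_def
proof (intro allI impI)
  fix u x y v
  assume xs: "xs = u @ x # y # v"
  have "qform (u @ y # x # v) \<le> qform (u @ x # y # v)"
    using assms[of "u @ y # x # v"] xs by simp
  then have "0 \<le> real_of_int ((x - y) * (sum_list v - sum_list u))"
    using qform_swap[of u x y v] by linarith
  then have "0 \<le> (x - y) * (sum_list v - sum_list u)"
    by (simp only: of_int_0_le_iff)
  then show "(y - x) * (sum_list v - sum_list u) \<le> 0"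
    by (simp add: algebra_simps)
qed

lemma swap_stable_rev: "swap_stable xs \<Longrightarrow> swap_stable (rev xs)"
  unfolding swap_stable_def
proof (intro allI impI)
  fix u x y v
  assume "\<forall>u x y v. xs = u @ x # y # v \<longrightarrow> (y - x) * (sum_list v - sum_list u) \<le> 0"
    and "rev xs = u @ x # y # v"
  then have "(x - y) * (sum_list (rev u) - sum_list (rev v)) \<le> 0"
    by (metis append.assoc append_Cons append_Nil rev.simps rev_append rev_rev_ident)
  then show "(y - x) * (sum_list v - sum_list u) \<le> 0"
    by (simp add: algebra_simps)
qed

lemma replicate_blocks_if_no_gap:
  assumes "\<And>p w r w' q. xs = p @ w # replicate (Suc r) c @ w' # q \<Longrightarrow> w = c \<or> w' = c"
  shows "\<exists>\<alpha> W \<beta>. xs = replicate \<alpha> c @ W @ replicate \<beta> c \<and> c \<notin> set W"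
  using assms
proof (induction xs)
  case Nil
  then show ?case by (metis append_Nil empty_iff empty_set replicate_0)
next
  case (Cons x xs)
  obtain \<alpha> W \<beta> where xs: "xs = replicate \<alpha> c @ W @ replicate \<beta> c" and "c \<notin> set W"
    using Cons.IH Cons.prems[of "x # _"] by (metis append_Cons)
  consider "x = c" | "x \<noteq> c" "W = []" | "x \<noteq> c" "\<alpha> = 0" | "x \<noteq> c" "W \<noteq> []" "\<alpha> \<noteq> 0"
    by blast
  then show ?case
  proof cases
    case 1
    then have "x # xs = replicate (Suc \<alpha>) c @ W @ replicate \<beta> c" using xs by simp
    then show ?thesis using \<open>c \<notin> set W\<close> by blast
  next
    case 2
    then have "x # xs = replicate 0 c @ [x] @ replicate (\<alpha> + \<beta>) c"
      using xs by (simp add: replicate_add)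
    then show ?thesis using 2 by fastforce
  next
    case 3
    then have "x # xs = replicate 0 c @ (x # W) @ replicate \<beta> c" using xs by simp
    then show ?thesis using 3 \<open>c \<notin> set W\<close> by fastforce
  next
    case 4
    then obtain w W' where W: "W = w # W'" by (cases W) auto
    then have "x # xs = [] @ x # replicate (Suc (\<alpha> - 1)) c @ w # W' @ replicate \<beta> c"
      using xs 4 by simp
    then have False using Cons.prems 4 W \<open>c \<notin> set W\<close> by fastforce
    then show ?thesis ..
  qed
qed

text \<open>The exchanges at the two ends of the run demand opposite inequalities between the masses
  to the left and to the right of it.\<close>
lemma swap_stable_no_gap:
  assumes stable: "swap_stable xs" and pos: "\<forall>w\<in>set xs. 0 < w \<and> w \<le> c"
    and xs: "xs = p @ w # replicate (Suc r) c @ w' # q"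
  shows "w = c \<or> w' = c"
proof (rule ccontr)
  assume "\<not> (w = c \<or> w' = c)"
  then have "0 < w" "w < c" "0 < w'" "w' < c" using pos xs by auto
  have "xs = p @ w # c # (replicate r c @ w' # q)"
    using xs by simp
  then have "(c - w) * (sum_list (replicate r c @ w' # q) - sum_list p) \<le> 0"
    using stable swap_stableD by metis
  with \<open>w < c\<close> have left: "int r * c + w' + sum_list q \<le> sum_list p"
    by (simp add: mult_le_0_iff sum_list_replicate)
  have "xs = (p @ w # replicate r c) @ c # w' # q"
    using xs by (simp add: replicate_app_Cons_same)
  then have "(w' - c) * (sum_list q - sum_list (p @ w # replicate r c)) \<le> 0"
    using stable swap_stableD by metis
  with \<open>w' < c\<close> have right: "sum_list p + w + int r * c \<le> sum_list q"
    by (simp add: mult_le_0_iff sum_list_replicate)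
  have "0 \<le> int r * c" using \<open>0 < w\<close> \<open>w < c\<close> by simp
  with left right \<open>0 < w\<close> \<open>0 < w'\<close> show False by linarith
qed

lemma swap_stable_blocks:
  assumes "swap_stable xs" and "\<forall>w\<in>set xs. 0 < w \<and> w \<le> c"
  obtains \<alpha> W \<beta> where "xs = replicate \<alpha> c @ W @ replicate \<beta> c" and "c \<notin> set W"
  using replicate_blocks_if_no_gap swap_stable_no_gap[OF assms] by metis

lemma swap_stable_run_bound:
  assumes "swap_stable (replicate (Suc n) c @ w # ys)" and "w < c"
  shows "int n * c \<le> sum_list ys"
proof -
  have "replicate (Suc n) c @ w # ys = replicate n c @ c # w # ys"
    by (simp add: replicate_app_Cons_same)
  then have "(w - c) * (sum_list ys - sum_list (replicate n c)) \<le> 0"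
    using assms(1) swap_stableD by metis
  with \<open>w < c\<close> show ?thesis
    by (simp add: mult_le_0_iff sum_list_replicate)
qed

lemma swap_stable_outer_runs:
  assumes "swap_stable (replicate \<alpha> c @ w # W @ replicate \<beta> c)"
    and "0 < w" and "w < c" and "sum_list (w # W) \<le> c"
  shows "\<alpha> \<le> Suc \<beta>"
proof (cases \<alpha>)
  case (Suc n)
  then have "int n * c \<le> sum_list W + int \<beta> * c"
    using swap_stable_run_bound[of n c w "W @ replicate \<beta> c"] assms(1,3)
    by (simp add: sum_list_replicate)
  also have "\<dots> < int (Suc \<beta>) * c"
    using assms(2,4) by (simp add: algebra_simps)
  finally have "n < Suc \<beta>"
    using assms(2,3) by (simp add: mult_less_cancel_right)
  then show ?thesis using Suc by simp
qed simp

lemma swap_stable_sorted_middle: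
  assumes stable: "swap_stable (u @ W @ v)" and pos: "\<forall>w\<in>set W. 0 < w"
    and small: "sum_list W + sum_list v \<le> sum_list u"
  shows "sorted W"
  unfolding sorted_iff_nth_Suc
proof (intro allI impI)
  fix i
  assume i: "Suc i < length W"
  define U V where "U = u @ take i W" and "V = drop (Suc (Suc i)) W @ v"
  have W: "W = take i W @ W ! i # W ! Suc i # drop (Suc (Suc i)) W"
    using i by (metis Cons_nth_drop_Suc Suc_lessD id_take_nth_drop)
  then have "u @ W @ v = U @ W ! i # W ! Suc i # V"
    unfolding U_def V_def by (metis append.assoc append_Cons)
  then have swap: "(W ! Suc i - W ! i) * (sum_list V - sum_list U) \<le> 0"
    using stable swap_stableD by metis
  have "sum_list W = sum_list (take i W) + W ! i + W ! Suc i + sum_list (drop (Suc (Suc i)) W)"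
    using W by (metis add.assoc sum_list.Cons sum_list_append)
  moreover have "0 \<le> sum_list (take i W)"
    using pos by (intro sum_list_nonneg) (meson in_set_takeD less_imp_le)
  moreover have "0 < W ! i" "0 < W ! Suc i"
    using pos i by simp_all
  ultimately have "sum_list V < sum_list U"
    using small unfolding U_def V_def by simp
  with swap show "W ! i \<le> W ! Suc i"
    by (simp add: mult_le_0_iff)
qed

lemma swap_stable_runs_balanced:
  assumes stable: "swap_stable (replicate \<alpha> c @ W @ replicate \<beta> c)" and "W \<noteq> []"
    and W: "\<forall>w\<in>set W. 0 < w \<and> w < c" "sum_list W < c"
  shows "\<alpha> \<le> Suc \<beta> \<and> \<beta> \<le> Suc \<alpha>"
proof
  obtain w W' where "W = w # W'" using \<open>W \<noteq> []\<close> by (cases W) auto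
  then show "\<alpha> \<le> Suc \<beta>"
    using swap_stable_outer_runs[of \<alpha> c w W' \<beta>] stable W by simp
next
  obtain w W' where rev_W: "rev W = w # W'" using \<open>W \<noteq> []\<close> by (cases "rev W") auto
  then have "w \<in> set W" "sum_list (w # W') = sum_list W"
    by (metis list.set_intros(1) set_rev, metis sum_list_rev)
  moreover have "swap_stable (replicate \<beta> c @ w # W' @ replicate \<alpha> c)"
    using swap_stable_rev[OF stable] rev_W by simp
  ultimately show "\<beta> \<le> Suc \<alpha>"
    using swap_stable_outer_runs[of \<beta> c w W' \<alpha>] W by simp
qed

lemma swap_stable_peak_middle_eq:
  assumes "swap_stable (replicate (Suc h) c @ W @ replicate h c)"
    and "\<forall>w\<in>set W. 0 < w" "sum_list W < c"
    and "mset W = mset mid" "sorted mid"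
  shows "W = mid"
proof -
  have "sorted W"
    using swap_stable_sorted_middle[of "replicate (Suc h) c" W "replicate h c"] assms(1-3)
    by (simp add: sum_list_replicate algebra_simps)
  then show ?thesis
    using assms(4,5) by (metis properties_for_sort sorted_sort_id)
qed

lemma mset_replicate_ends_cancel:
  assumes "mset (replicate a c @ W @ replicate b c) = mset (replicate a' c @ W' @ replicate b' c)"
    and "c \<notin> set W" "c \<notin> set W'"
  shows "a + b = a' + b'" and "mset W = mset W'"
proof -
  have mset_ends: "mset (replicate a c @ W @ replicate b c) = replicate_mset (a + b) c + mset W"
    for a b W by (simp add: multiset_eq_iff)
  have eq: "replicate_mset (a + b) c + mset W = replicate_mset (a' + b') c + mset W'"
    using assms(1) unfolding mset_ends .
  then have "count (replicate_mset (a + b) c + mset W) c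
      = count (replicate_mset (a' + b') c + mset W') c"
    by (rule arg_cong)
  then show "a + b = a' + b'"
    using assms(2,3) by (simp add: count_mset_0_iff[THEN iffD2])
  with eq show "mset W = mset W'" by simp
qed

lemma swap_stable_eq_peak_arrangement:
  fixes c :: int and mid :: "int list" and h :: nat
  defines "xstar \<equiv> replicate (Suc h) c @ mid @ replicate h c"
  assumes stable: "swap_stable xs" and perm: "mset xs = mset xstar"
    and mid: "\<forall>w\<in>set mid. 0 < w \<and> w < c" "sum_list mid < c" "mid \<noteq> []" "sorted mid"
  shows "xs = xstar \<or> xs = rev xstar"
proof -
  have "0 < c"
    using mid(1,3) by (metis all_not_in_conv order.strict_trans set_empty)
  moreover have "set xs = set xstar"
    using perm by (metis set_mset_mset)
  ultimately have "\<forall>w\<in>set xs. 0 < w \<and> w \<le> c"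
    using mid(1) unfolding xstar_def by fastforce
  then obtain \<alpha> W \<beta> where xs: "xs = replicate \<alpha> c @ W @ replicate \<beta> c" and "c \<notin> set W"
    using swap_stable_blocks stable by metis
  moreover have "c \<notin> set mid" using mid(1) by blast
  ultimately have "\<alpha> + \<beta> = Suc h + h" and perm_mid: "mset W = mset mid"
    using mset_replicate_ends_cancel perm unfolding xstar_def by metis+
  moreover have "sum_list W < c" "W \<noteq> []" and W: "\<forall>w\<in>set W. 0 < w \<and> w < c"
    using perm_mid mid by (metis sum_mset_sum_list, auto dest: mset_eq_setD)
  ultimately consider "\<alpha> = Suc h" "\<beta> = h" | "\<alpha> = h" "\<beta> = Suc h"
    using swap_stable_runs_balanced[of \<alpha> c W \<beta>] stable xs by fastforce
  then show ?thesis
  proof cases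
    case 1
    then have "W = mid"
      using swap_stable_peak_middle_eq stable xs W \<open>sum_list W < c\<close> perm_mid mid(4) by simp
    then show ?thesis using xs 1 unfolding xstar_def by simp
  next
    case 2
    then have "rev xs = replicate (Suc h) c @ rev W @ replicate h c"
      using xs by (simp only: rev_append rev_replicate append.assoc)
    moreover have "mset (rev W) = mset mid" "sum_list (rev W) < c"
      using perm_mid \<open>sum_list W < c\<close> by (simp_all add: sum_list_rev)
    ultimately have "rev W = mid"
      using swap_stable_peak_middle_eq swap_stable_rev[OF stable] W mid(4) by simp
    then show ?thesis using \<open>rev xs = _\<close> unfolding xstar_def by auto
  qed
qed

lemma qform_max_peak_arrangement:
  fixes c :: int and mid :: "int list" and h :: nat
  defines "xstar \<equiv> replicate (Suc h) c @ mid @ replicate h c"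
  assumes "\<forall>w\<in>set mid. 0 < w \<and> w < c" "sum_list mid < c" "mid \<noteq> []" "sorted mid"
    and perm: "mset xs = mset xstar"
  shows "qform xs \<le> qform xstar \<and> (qform xs = qform xstar \<longrightarrow> xs = xstar \<or> xs = rev xstar)"
proof -
  define P where "P = {ys. mset ys = mset xstar}"
  have "finite (qform ` P)" "xstar \<in> P"
    unfolding P_def by (simp_all add: mset_eq_finite)
  then obtain xm where "xm \<in> P" and max: "qform xm = Max (qform ` P)"
    by (metis (no_types, lifting) Max_in empty_iff image_iff)
  have below_max: "qform ys \<le> qform xm" if "ys \<in> P" for ys
    using max \<open>finite (qform ` P)\<close> that by simp
  have maximizers: "ys = xstar \<or> ys = rev xstar" if "ys \<in> P" "qform ys = qform xm" for ys
    using that assms below_max unfolding P_def xstar_def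
    by (intro swap_stable_eq_peak_arrangement swap_stable_if_qform_max) auto
  then have "qform xstar = qform xm"
    using \<open>xm \<in> P\<close> qform_rev by metis
  then show ?thesis
    using below_max maximizers perm unfolding P_def by simp
qed

lemma strict_mono_between:
  fixes f :: "nat \<Rightarrow> 'a::order"
  assumes "\<And>i. l \<le> i \<Longrightarrow> i < r \<Longrightarrow> f i < f (Suc i)" and "l \<le> i" "i < j" "j \<le> r"
  shows "f i < f j"
  using assms(3,4)
proof (induction j)
  case (Suc j)
  then show ?case
    using assms(1,2) by (cases "i = j") (auto intro: order.strict_trans)
qed simp

lemma sorted_concat_replicate:
  "sorted_wrt (\<lambda>i j. a i \<le> a j) ns \<Longrightarrow> sorted (concat (map (\<lambda>i. replicate (m i) (a i)) ns))"
  by (induction ns) (auto simp: sorted_append)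

lemma mset_concat_replicate:
  "mset (concat (map (\<lambda>i. replicate (m i) (a i)) ns)) = (\<Sum>i\<leftarrow>ns. replicate_mset (m i) (a i))"
  by (induction ns) simp_all

lemma sum_list_concat_replicate:
  "sum_list (concat (map (\<lambda>i. replicate (m i) (a i)) ns)) = (\<Sum>i\<leftarrow>ns. int (m i) * a i)"
  by (induction ns) (simp_all add: sum_list_replicate)

theorem theorem3p1:
  fixes k s h :: nat and a :: "nat \<Rightarrow> int" and m :: "nat \<Rightarrow> nat"
  assumes "k \<ge> 1" and "s \<ge> 2"
    and "a 1 \<ge> 1"
    and "\<And>i. 1 \<le> i \<Longrightarrow> i < s \<Longrightarrow> a i < a (Suc i)"
    and "\<And>i. 1 \<le> i \<Longrightarrow> i \<le> s \<Longrightarrow> m i \<ge> 1"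
    and "(\<Sum>i=1..s. m i) = k"
    and "m s = 2 * h + 1"
    and "a s > (\<Sum>i=1..<s. int (m i) * a i)"
  defines "xstar \<equiv> replicate (h + 1) (a s)
                   @ concat (map (\<lambda>i. replicate (m i) (a i)) [1..<s])
                   @ replicate h (a s)"
  shows "mset xstar = bmset s a m
     \<and> (\<forall>xs. mset xs = bmset s a m \<longrightarrow>
           qform xs \<le> qform xstar
         \<and> (qform xs = qform xstar \<longrightarrow> xs = xstar \<or> xs = rev xstar))"
proof -
  define mid where "mid = concat (map (\<lambda>i. replicate (m i) (a i)) [1..<s])"
  have a_less: "a i < a j" if "1 \<le> i" "i < j" "j \<le> s" for i j
    using strict_mono_between[of 1 s a] assms(4) that by blast
  have a_bounds: "0 < a i \<and> a i < a s" if "1 \<le> i" "i < s" for i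
    using a_less[of 1 i] a_less[of i s] assms(3) that by (cases "i = 1") auto
  have "{1..s} = insert s {1..<s}"
    using assms(2) by auto
  then have "mset xstar = bmset s a m"
    unfolding xstar_def bmset_def using assms(7)
    by (simp add: mset_concat_replicate interv_sum_list_conv_sum_set_nat multiset_eq_iff)
  moreover have "\<forall>w\<in>set mid. 0 < w \<and> w < a s"
    unfolding mid_def using a_bounds by auto
  moreover have "sum_list mid < a s"
    unfolding mid_def sum_list_concat_replicate using assms(8)
    by (simp add: interv_sum_list_conv_sum_set_nat)
  moreover have "mid \<noteq> []"
    unfolding mid_def using assms(2) assms(5)[of 1] by (simp add: upt_conv_Cons)
  moreover have "sorted mid"
    unfolding mid_def using a_less
    by (intro sorted_concat_replicate sorted_wrt_mono_rel[OF _ sorted_wrt_upt]) (auto intro: less_imp_le)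
  ultimately show ?thesis
    using qform_max_peak_arrangement[where c="a s" and mid=mid and h=h]
    unfolding xstar_def mid_def by simp
qed

end
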